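(* Let $\mathbbm k_{\mathrm{loc}}:=\mathbb Z[z^{\pm1}]\big[\tfrac1{1-z^i}:i\in\mathbb Z\setminus\{0\}\big]$. The K-theoretic residue map $\rho_{\mathsf K}\colon\mathbbm k_{\mathrm{loc}}\to\mathbb Z$ (the $z^0$-coefficient of $f_+-f_-$, where $f_+$, $f_-$ are the Laurent expansions of $f$ at $z=0$ and $z=\infty$) vanishes on $\mathbb Z[z^{\pm1}]$ and satisfies, for all integers $n\ge1$, $k\ge0$ and $0\le a<n$, $$\rho\Big(\frac{z^{nk+a}}{(1-z^n)^{k+1}}\Big)=\begin{cases}1&k=a=0,\\0&\text{otherwise}.\end{cases}$$ Moreover, $\rho_{\mathsf K}$ is the unique $\mathbb Z$-linear map $\rho\colon\mathbbm k_{\mathrm{loc}}\to\mathbb Z$ which vanishes on $\mathbb Z[z^{\pm1}]$ and satisfies these identities.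
   Context: These identities arise as the normalization condition $\rho(e(z\otimes\mathcal L)^{-1})=1$ (with $e=\wedge^\bullet_{-1}$) for line bundles $\mathcal L$ on weighted projective spaces $\mathbb P(n,\dots,n)$; a residue map in this sense is what governs the passage from the vertex algebra to the Lie algebra. For $f\in\mathbbm k_{\mathrm{loc}}$ the expansions $f_+\in\mathbb Z(\!(z)\!)$ and $f_-\in\mathbb Z(\!(z^{-1})\!)$ are the usual Laurent expansions of the rational function $f$. *)

theory Defs
  imports "HOL-Computational_Algebra.Fraction_Field"
          "HOL-Computational_Algebra.Formal_Laurent_Series"
begin

type_synonym ratfun = "int poly fract"

definition zvar :: ratfun where
  "zvar = Fraction_Field.Fract [:0, 1:] 1"

inductive_set kloc :: "ratfun set" where
  const: "of_int c \<in> kloc"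
| zv: "zvar \<in> kloc"
| zinv: "inverse zvar \<in> kloc"
| loc: "i \<noteq> 0 \<Longrightarrow> inverse (1 - zvar powi i) \<in> kloc"
| add: "f \<in> kloc \<Longrightarrow> g \<in> kloc \<Longrightarrow> f + g \<in> kloc"
| mult: "f \<in> kloc \<Longrightarrow> g \<in> kloc \<Longrightarrow> f * g \<in> kloc"

definition laurent_polys :: "ratfun set" where
  "laurent_polys = {Fraction_Field.Fract p 1 * zvar powi m | p m. True}"

definition poly_to_fls :: "int poly \<Rightarrow> rat fls" where
  "poly_to_fls p = fps_to_fls (fps_of_poly (map_poly of_int p))"

definition expand0 :: "ratfun \<Rightarrow> rat fls" where
  "expand0 f = (THE L. \<exists>p q. q \<noteq> 0 \<and> f = Fraction_Field.Fract p q \<and> L = poly_to_fls p / poly_to_fls q)"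

definition eval_in_ratfun :: "int poly \<Rightarrow> ratfun \<Rightarrow> ratfun" where
  "eval_in_ratfun p x = poly (map_poly (\<lambda>c. Fraction_Field.Fract [:c:] 1) p) x"

definition subst_inv :: "ratfun \<Rightarrow> ratfun" where
  "subst_inv f = (THE g. \<exists>p q. q \<noteq> 0 \<and> f = Fraction_Field.Fract p q \<and>
      g = eval_in_ratfun p (inverse zvar) / eval_in_ratfun q (inverse zvar))"

text \<open>The z^0 coefficient of f_+ is coefficient 0 of expand0 f; the expansion f_- at
  infinity is the expansion of f(1/w) at w = 0 with w = z^{-1}, so its z^0 coefficient
  is coefficient 0 of expand0 (subst_inv f).\<close>
definition rhoK :: "ratfun \<Rightarrow> rat" where
  "rhoK f = fls_nth (expand0 f) 0 - fls_nth (expand0 (subst_inv f)) 0"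

end

theory Submission
  imports Defs
begin

(* Both Laurent expansions are ring homomorphisms: each extends an injective ring map on Z[z] to
   the fraction field (expansion in Q((z)), resp. substitution z := 1/z). Hence rhoK is additive
   and Z-linear. It kills every monomial z^m, whose expansions at 0 and at infinity have the same
   constant term, so it kills Laurent polynomials. The expansion of z^(nk+a)/(1 - z^n)^(k+1) at 0
   has constant term 1 exactly when k = a = 0, while at infinity it becomes
   z^(n-a)/(z^n - 1)^(k+1), which vanishes at 0 since a < n.

   Integrality and uniqueness follow once k_loc is the Z-span of the Laurent polynomials and these
   basic fractions. Every element of k_loc becomes a Laurent polynomial after multiplication by
   some (1 - z^N)^m, and since z^e - z^e' is divisible by 1 - z^N whenever N divides e - e',
   peeling off one basic fraction lowers the exponent of the denominator by one. *)

section \<open>Laurent expansions at zero and at infinity\<close>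

lemma map_poly_of_int_add:
  "map_poly (of_int :: int \<Rightarrow> 'a::ring_1) (p + q) = map_poly of_int p + map_poly of_int q"
  by (rule poly_eqI) (simp add: coeff_map_poly)

lemma map_poly_of_int_mult:
  "map_poly (of_int :: int \<Rightarrow> 'a::comm_ring_1) (p * q) = map_poly of_int p * map_poly of_int q"
  by (induct p) (simp_all add: map_poly_pCons map_poly_of_int_add map_poly_smult)

definition fract_extend :: "('a::idom \<Rightarrow> 'b::field) \<Rightarrow> 'a fract \<Rightarrow> 'b" where
  "fract_extend h x = (THE y. \<exists>p q. q \<noteq> 0 \<and> x = Fraction_Field.Fract p q \<and> y = h p / h q)"

locale inj_idom_hom_to_field =
  fixes h :: "'a::idom \<Rightarrow> 'b::field"
  assumes add: "h (p + q) = h p + h q"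
    and mult: "h (p * q) = h p * h q"
    and one: "h 1 = 1"
    and eq_0_iff: "h p = 0 \<longleftrightarrow> p = 0"
begin

lemma extend_Fract:
  assumes "q \<noteq> 0"
  shows "fract_extend h (Fraction_Field.Fract p q) = h p / h q"
  unfolding fract_extend_def
proof (rule the_equality)
  show "\<exists>p' q'. q' \<noteq> 0 \<and> Fraction_Field.Fract p q = Fraction_Field.Fract p' q' \<and> h p / h q = h p' / h q'"
    using assms by blast
next
  fix y
  assume "\<exists>p' q'. q' \<noteq> 0 \<and> Fraction_Field.Fract p q = Fraction_Field.Fract p' q' \<and> y = h p' / h q'"
  then obtain p' q' where q': "q' \<noteq> 0" and eq: "Fraction_Field.Fract p q = Fraction_Field.Fract p' q'"
    and y: "y = h p' / h q'" by blast
  from eq have "h p * h q' = h p' * h q"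
    using assms q' by (simp add: eq_fract flip: mult)
  then show "y = h p / h q"
    using assms q' y by (simp add: eq_0_iff frac_eq_eq)
qed

lemma extend_add: "fract_extend h (x + y) = fract_extend h x + fract_extend h y"
  by (cases x, cases y) (simp add: extend_Fract add mult eq_0_iff add_frac_eq)

lemma extend_mult: "fract_extend h (x * y) = fract_extend h x * fract_extend h y"
  by (cases x, cases y) (simp add: extend_Fract mult)

lemma extend_0: "fract_extend h 0 = 0"
  by (simp add: fract_expand(1) extend_Fract eq_0_iff)

lemma extend_1: "fract_extend h 1 = 1"
  by (simp add: fract_expand(2) extend_Fract one)

lemma extend_inverse: "fract_extend h (inverse x) = inverse (fract_extend h x)"
  by (cases x rule: Fract_cases_nonzero) (simp_all add: extend_Fract extend_0)

lemma extend_uminus: "fract_extend h (- x) = - fract_extend h x"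
  by (metis extend_add extend_0 add.right_inverse eq_neg_iff_add_eq_0)

lemma extend_diff: "fract_extend h (x - y) = fract_extend h x - fract_extend h y"
  by (simp only: diff_conv_add_uminus extend_add extend_uminus)

lemma extend_divide: "fract_extend h (x / y) = fract_extend h x / fract_extend h y"
  by (simp only: divide_inverse extend_mult extend_inverse)

lemma extend_power: "fract_extend h (x ^ n) = fract_extend h x ^ n"
  by (induct n) (simp_all add: extend_1 extend_mult)

lemma extend_power_int: "fract_extend h (x powi n) = fract_extend h x powi n"
  by (simp add: power_int_def extend_power extend_inverse)

lemma extend_of_int: "fract_extend h (of_int n) = of_int n"
  by (induct n rule: int_induct[where k = 0]) (simp_all add: extend_0 extend_1 extend_add extend_diff)

end

interpretation expand0: inj_idom_hom_to_field poly_to_fls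
  rewrites "fract_extend poly_to_fls = expand0"
  by unfold_locales
    (simp_all add: poly_to_fls_def map_poly_of_int_add map_poly_of_int_mult fps_of_poly_add
      fps_of_poly_mult fls_times_fps_to_fls map_poly_eq_0_iff fps_of_poly_eq_iff[of _ 0, simplified]
      fun_eq_iff expand0_def fract_extend_def)

lemma of_int_ratfun: "(of_int c :: ratfun) = Fraction_Field.Fract [:c:] 1"
  by (cases c rule: int_cases2) (simp_all add: of_nat_fract of_nat_poly)

lemma eval_in_ratfun_eq: "eval_in_ratfun p x = poly (map_poly of_int p) x"
  by (simp add: eval_in_ratfun_def flip: of_int_ratfun)

lemma zvar_nonzero: "zvar \<noteq> 0"
  by (simp add: zvar_def fract_expand eq_fract)

lemma poly_map_of_int_zvar: "poly (map_poly of_int p) zvar = Fraction_Field.Fract p 1"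
  by (induct p) (simp_all add: map_poly_pCons of_int_ratfun zvar_def fract_collapse)

lemma poly_map_of_int_inverse_zvar_eq_0_iff: "poly (map_poly of_int p) (inverse zvar) = 0 \<longleftrightarrow> p = 0"
proof
  assume "poly (map_poly of_int p) (inverse zvar) = 0"
  moreover have "reflect_poly (map_poly of_int p) = (map_poly of_int (reflect_poly p) :: ratfun poly)"
    by (rule poly_eqI) (simp add: coeff_reflect_poly coeff_map_poly degree_map_poly)
  ultimately have "Fraction_Field.Fract (reflect_poly p) 1 = 0"
    using poly_reflect_poly_nz[OF zvar_nonzero, of "map_poly of_int p"] by (simp add: poly_map_of_int_zvar)
  then show "p = 0"
    by (simp add: fract_expand eq_fract)
qed simp

interpretation subst_inv: inj_idom_hom_to_field "\<lambda>p. eval_in_ratfun p (inverse zvar)"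
  rewrites "fract_extend (\<lambda>p. eval_in_ratfun p (inverse zvar)) = subst_inv"
  by unfold_locales (simp_all add: eval_in_ratfun_eq map_poly_of_int_add map_poly_of_int_mult
        poly_map_of_int_inverse_zvar_eq_0_iff fun_eq_iff subst_inv_def fract_extend_def)

section \<open>The residue of Laurent polynomials and basic fractions\<close>

lemma expand0_zvar: "expand0 zvar = fls_X"
  by (simp add: zvar_def expand0.extend_Fract poly_to_fls_def map_poly_pCons)

lemma subst_inv_zvar: "subst_inv zvar = inverse zvar"
  by (simp add: zvar_def subst_inv.extend_Fract eval_in_ratfun_eq map_poly_pCons)

lemma rhoK_add: "rhoK (f + g) = rhoK f + rhoK g"
  by (simp add: rhoK_def expand0.extend_add subst_inv.extend_add)

lemma rhoK_of_int_mult: "rhoK (of_int c * f) = of_int c * rhoK f"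
  by (simp add: rhoK_def expand0.extend_mult subst_inv.extend_mult expand0.extend_of_int
      subst_inv.extend_of_int algebra_simps)

lemma rhoK_zvar_power_int: "rhoK (zvar powi m) = 0"
  by (simp add: rhoK_def expand0.extend_power_int subst_inv.extend_power_int expand0_zvar
      subst_inv_zvar expand0.extend_inverse power_int_inverse fls_inverse_X_intpow)

lemma Fract_pCons_one: "Fraction_Field.Fract (pCons a p) 1 = of_int a + zvar * Fraction_Field.Fract p 1"
  by (simp add: zvar_def of_int_ratfun)

lemma laurent_polys_induct [consumes 1, case_names zvar_power_int add of_int_mult]:
  assumes "f \<in> laurent_polys"
    and monomial: "\<And>e. P (zvar powi e)"
    and add: "\<And>f g. P f \<Longrightarrow> P g \<Longrightarrow> P (f + g)"
    and of_int_mult: "\<And>c f. P f \<Longrightarrow> P (of_int c * f)"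
  shows "P f"
proof -
  have "P (Fraction_Field.Fract p 1 * zvar powi e)" for p e
  proof (induct p arbitrary: e)
    case 0
    then show ?case
      using of_int_mult[OF monomial, of 0 0] by (simp add: fract_collapse)
  next
    case (pCons a p)
    have "Fraction_Field.Fract (pCons a p) 1 * zvar powi e
        = of_int a * zvar powi e + Fraction_Field.Fract p 1 * zvar powi (e + 1)"
      by (simp add: Fract_pCons_one algebra_simps power_int_add zvar_nonzero)
    then show ?case
      using add of_int_mult monomial pCons by metis
  qed
  then show ?thesis
    using assms(1) by (auto simp: laurent_polys_def)
qed

lemma rhoK_laurent_polys: "f \<in> laurent_polys \<Longrightarrow> rhoK f = 0"
  by (induct rule: laurent_polys_induct) (simp_all add: rhoK_zvar_power_int rhoK_add rhoK_of_int_mult)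

lemma fls_nth_expand0_Fract:
  assumes "coeff q 0 \<noteq> 0"
  shows "fls_nth (expand0 (Fraction_Field.Fract p q)) 0 = of_int (coeff p 0) / of_int (coeff q 0)"
proof -
  define P Q where "P = fps_of_poly (map_poly (of_int :: int \<Rightarrow> rat) p)"
    and "Q = fps_of_poly (map_poly (of_int :: int \<Rightarrow> rat) q)"
  have Q0: "Q $ 0 \<noteq> 0"
    using assms by (simp add: Q_def coeff_map_poly)
  from assms have "q \<noteq> 0"
    by auto
  then have "expand0 (Fraction_Field.Fract p q) = fps_to_fls P / fps_to_fls Q"
    by (simp add: expand0.extend_Fract poly_to_fls_def P_def Q_def)
  also have "\<dots> = fps_to_fls (P / Q)"
    using Q0 by (simp add: fls_divide_fps_to_fls)
  finally show ?thesis
    using Q0 by (simp add: fps_divide_unit divide_inverse P_def Q_def coeff_map_poly)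
qed

lemma zvar_power: "zvar ^ j = Fraction_Field.Fract ([:0, 1:] ^ j) 1"
  by (induct j) (simp_all add: zvar_def fract_collapse)

lemma Fract_quotient: "Fraction_Field.Fract p 1 / Fraction_Field.Fract q 1 = Fraction_Field.Fract p q"
  by (cases "q = 0") (simp_all add: fract_collapse)

lemma one_minus_zvar_power_eq_Fract: "1 - zvar ^ n = Fraction_Field.Fract (1 - [:0, 1:] ^ n) 1"
  by (simp add: zvar_power One_fract_def)

lemma one_minus_zvar_power_nonzero:
  assumes "n \<ge> 1"
  shows "1 - zvar ^ n \<noteq> 0"
proof -
  have "poly (1 - [:0, 1:] ^ n :: int poly) 0 \<noteq> 0"
    using assms by (simp add: power_0_left)
  then have "1 - [:0, 1:] ^ n \<noteq> (0 :: int poly)"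
    by (metis poly_0)
  then show ?thesis
    unfolding one_minus_zvar_power_eq_Fract by (simp add: Zero_fract_def eq_fract)
qed

lemma Fract_one_power: "Fraction_Field.Fract p 1 ^ m = Fraction_Field.Fract (p ^ m) 1"
  by (induct m) (simp_all add: fract_collapse)

lemma zvar_power_minus_one_eq_Fract: "zvar ^ n - 1 = Fraction_Field.Fract ([:0, 1:] ^ n - 1) 1"
  by (simp add: zvar_power One_fract_def)

lemma zvar_power_divide_Fract_power:
  "zvar ^ j / Fraction_Field.Fract q 1 ^ m = Fraction_Field.Fract ([:0, 1:] ^ j) (q ^ m)"
  by (simp only: zvar_power Fract_one_power Fract_quotient)

definition basic_fraction :: "nat \<Rightarrow> nat \<Rightarrow> nat \<Rightarrow> ratfun" where
  "basic_fraction n k a = zvar ^ (n * k + a) / (1 - zvar ^ n) ^ (k + 1)"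

lemma subst_inv_basic_fraction:
  assumes "n \<ge> 1" "a < n"
  shows "subst_inv (basic_fraction n k a) = zvar ^ (n - a) / (zvar ^ n - 1) ^ (k + 1)"
proof -
  have "zvar ^ n - 1 \<noteq> 0"
    using one_minus_zvar_power_nonzero[OF assms(1)] by (metis right_minus_eq)
  have "subst_inv (basic_fraction n k a) = inverse zvar ^ (n * k + a) / (1 - inverse zvar ^ n) ^ (k + 1)"
    by (simp only: basic_fraction_def subst_inv.extend_divide subst_inv.extend_power
        subst_inv.extend_diff subst_inv.extend_1 subst_inv_zvar)
  also have "1 - inverse zvar ^ n = (zvar ^ n - 1) / zvar ^ n"
    using zvar_nonzero by (simp add: field_simps)
  also have "inverse zvar ^ (n * k + a) / ((zvar ^ n - 1) / zvar ^ n) ^ (k + 1)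
      = (zvar ^ n) ^ (k + 1) / (zvar ^ (n * k + a) * (zvar ^ n - 1) ^ (k + 1))"
    using zvar_nonzero \<open>zvar ^ n - 1 \<noteq> 0\<close> by (simp add: power_divide field_simps)
  also have "(zvar ^ n) ^ (k + 1) = zvar ^ (n * k + a) * zvar ^ (n - a)"
    using assms by (simp add: power_mult[symmetric] power_add[symmetric] algebra_simps)
  finally show ?thesis
    using zvar_nonzero by simp
qed

lemma rhoK_basic_fraction:
  assumes "n \<ge> 1" "a < n"
  shows "rhoK (basic_fraction n k a) = (if k = 0 \<and> a = 0 then 1 else 0)"
proof -
  have "coeff ((1 - [:0, 1:] ^ n) ^ (k + 1) :: int poly) 0 = 1"
    and "coeff ([:0, 1:] ^ (n * k + a) :: int poly) 0 = (if k = 0 \<and> a = 0 then 1 else 0)"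
    using assms by (simp_all add: poly_0_coeff_0[symmetric] power_0_left)
  then have at_zero: "fls_nth (expand0 (basic_fraction n k a)) 0 = (if k = 0 \<and> a = 0 then 1 else 0)"
    unfolding basic_fraction_def one_minus_zvar_power_eq_Fract zvar_power_divide_Fract_power
    by (simp add: fls_nth_expand0_Fract)
  have "coeff (([:0, 1:] ^ n - 1) ^ (k + 1) :: int poly) 0 \<noteq> 0"
    and "coeff ([:0, 1:] ^ (n - a) :: int poly) 0 = 0"
    using assms by (simp_all add: poly_0_coeff_0[symmetric] power_0_left)
  then have at_infinity: "fls_nth (expand0 (subst_inv (basic_fraction n k a))) 0 = 0"
    unfolding subst_inv_basic_fraction[OF assms] zvar_power_minus_one_eq_Fract
      zvar_power_divide_Fract_power
    by (simp add: fls_nth_expand0_Fract)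
  show ?thesis
    by (simp add: rhoK_def at_zero at_infinity)
qed

section \<open>Partial fraction decomposition of k_loc\<close>

lemma Fract_mult_zvar_power_int_in_laurent_polys:
  "Fraction_Field.Fract p 1 * zvar powi m \<in> laurent_polys"
  by (auto simp: laurent_polys_def)

lemma zvar_power_int_in_laurent_polys: "zvar powi m \<in> laurent_polys"
  using Fract_mult_zvar_power_int_in_laurent_polys[of 1 m] by (simp add: fract_collapse)

lemma of_int_in_laurent_polys: "of_int c \<in> laurent_polys"
  using Fract_mult_zvar_power_int_in_laurent_polys[of "[:c:]" 0] by (simp add: of_int_ratfun)

lemma laurent_polys_mult:
  assumes "f \<in> laurent_polys" "g \<in> laurent_polys"
  shows "f * g \<in> laurent_polys"
proof -
  obtain p m q m' where "f = Fraction_Field.Fract p 1 * zvar powi m"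
    and "g = Fraction_Field.Fract q 1 * zvar powi m'"
    using assms by (auto simp: laurent_polys_def)
  then have "f * g = Fraction_Field.Fract (p * q) 1 * zvar powi (m + m')"
    using zvar_nonzero by (simp add: power_int_add)
  then show ?thesis
    by (simp add: Fract_mult_zvar_power_int_in_laurent_polys)
qed

lemma Fract_mult_zvar_power_int_shift:
  "Fraction_Field.Fract p 1 * zvar powi m
    = Fraction_Field.Fract (p * [:0, 1:] ^ k) 1 * zvar powi (m - int k)"
proof -
  have "zvar powi m = zvar ^ k * zvar powi (m - int k)"
    using power_int_add[of zvar "int k" "m - int k"] zvar_nonzero by simp
  then show ?thesis
    by (simp add: zvar_power)
qed

lemma laurent_polys_add:
  assumes "f \<in> laurent_polys" "g \<in> laurent_polys"
  shows "f + g \<in> laurent_polys"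
proof -
  obtain p m q m' where f: "f = Fraction_Field.Fract p 1 * zvar powi m"
    and g: "g = Fraction_Field.Fract q 1 * zvar powi m'"
    using assms by (auto simp: laurent_polys_def)
  define d where "d = min m m'"
  have "f = Fraction_Field.Fract (p * [:0, 1:] ^ nat (m - d)) 1 * zvar powi d"
    using Fract_mult_zvar_power_int_shift[of p m "nat (m - d)"] by (simp add: f d_def)
  moreover have "g = Fraction_Field.Fract (q * [:0, 1:] ^ nat (m' - d)) 1 * zvar powi d"
    using Fract_mult_zvar_power_int_shift[of q m' "nat (m' - d)"] by (simp add: g d_def)
  ultimately have "f + g
      = Fraction_Field.Fract (p * [:0, 1:] ^ nat (m - d) + q * [:0, 1:] ^ nat (m' - d)) 1 * zvar powi d"
    by (simp only: distrib_right[symmetric]) simp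
  then show ?thesis
    by (simp add: Fract_mult_zvar_power_int_in_laurent_polys)
qed

lemma laurent_polys_uminus: "f \<in> laurent_polys \<Longrightarrow> - f \<in> laurent_polys"
  using laurent_polys_mult[OF of_int_in_laurent_polys[of "- 1"]] by simp

lemma laurent_polys_diff: "f \<in> laurent_polys \<Longrightarrow> g \<in> laurent_polys \<Longrightarrow> f - g \<in> laurent_polys"
  using laurent_polys_add[OF _ laurent_polys_uminus] by simp

lemma laurent_polys_power: "f \<in> laurent_polys \<Longrightarrow> f ^ k \<in> laurent_polys"
  using of_int_in_laurent_polys[of 1] by (induct k) (simp_all add: laurent_polys_mult)

lemma laurent_polys_sum: "(\<And>i. i \<in> A \<Longrightarrow> f i \<in> laurent_polys) \<Longrightarrow> sum f A \<in> laurent_polys"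
  using of_int_in_laurent_polys[of 0]
  by (induct A rule: infinite_finite_induct) (simp_all add: laurent_polys_add)

lemma zvar_power_int_diff_factor:
  assumes "int N dvd e - e'"
  shows "\<exists>w\<in>laurent_polys. zvar powi e - zvar powi e' = (1 - zvar ^ N) * w"
proof -
  have shifted: "\<exists>w\<in>laurent_polys. zvar powi d - zvar powi (d + int (N * k)) = (1 - zvar ^ N) * w"
    for d k
  proof
    have "zvar powi int (N * k) = (zvar ^ N) ^ k"
      by (simp only: power_int_of_nat power_mult)
    then have "zvar powi d - zvar powi (d + int (N * k)) = zvar powi d * (1 - (zvar ^ N) ^ k)"
      using power_int_add[of zvar d "int (N * k)"] zvar_nonzero by (simp add: right_diff_distrib)
    then show "zvar powi d - zvar powi (d + int (N * k))
        = (1 - zvar ^ N) * (zvar powi d * (\<Sum>i<k. (zvar ^ N) ^ i))"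
      by (simp only: one_diff_power_eq mult.left_commute)
    show "zvar powi d * (\<Sum>i<k. (zvar ^ N) ^ i) \<in> laurent_polys"
      using zvar_power_int_in_laurent_polys[of "int N"]
      by (simp add: laurent_polys_mult laurent_polys_sum laurent_polys_power zvar_power_int_in_laurent_polys)
  qed
  obtain q where q: "e - e' = int N * q"
    using assms by (auto elim: dvdE)
  show ?thesis
  proof (cases "q \<ge> 0")
    case True
    with q have "e = e' + int (N * nat q)"
      by simp
    then show ?thesis
      using shifted[of e' "nat q"] laurent_polys_uminus by (metis minus_diff_eq mult_minus_right)
  next
    case False
    with q have "e' = e + int (N * nat (- q))"
      by (simp add: algebra_simps)
    then show ?thesis
      using shifted[of e] by blast
  qed
qed

definition has_denominator_one_minus_zvar_power :: "ratfun \<Rightarrow> bool" where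
  "has_denominator_one_minus_zvar_power f \<longleftrightarrow>
    (\<exists>N m. N \<ge> 1 \<and> f * (1 - zvar ^ N) ^ m \<in> laurent_polys)"

lemma one_minus_zvar_power_in_laurent_polys: "1 - zvar ^ N \<in> laurent_polys"
  using laurent_polys_diff[OF of_int_in_laurent_polys[of 1] zvar_power_int_in_laurent_polys[of "int N"]]
  by simp

lemma denominator_one_minus_zvar_power_mult:
  assumes "f * (1 - zvar ^ N) ^ m \<in> laurent_polys"
  shows "f * (1 - zvar ^ (N * M)) ^ m \<in> laurent_polys"
proof -
  have "int N dvd 0 - int (N * M)"
    by simp
  then obtain w where w: "w \<in> laurent_polys" "zvar powi 0 - zvar powi int (N * M) = (1 - zvar ^ N) * w"
    using zvar_power_int_diff_factor by blast
  then have "1 - zvar ^ (N * M) = (1 - zvar ^ N) * w"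
    by (simp only: power_int_0_right power_int_of_nat)
  then have "f * (1 - zvar ^ (N * M)) ^ m = f * (1 - zvar ^ N) ^ m * w ^ m"
    by (simp add: power_mult_distrib)
  also have "\<dots> \<in> laurent_polys"
    using assms w(1) by (simp add: laurent_polys_mult laurent_polys_power)
  finally show ?thesis .
qed

lemma has_denominator_one_minus_zvar_power_add_mult:
  assumes "has_denominator_one_minus_zvar_power f" "has_denominator_one_minus_zvar_power g"
  shows "has_denominator_one_minus_zvar_power (f + g)"
    and "has_denominator_one_minus_zvar_power (f * g)"
proof -
  obtain N m M m' where "N \<ge> 1" "M \<ge> 1"
    and "f * (1 - zvar ^ N) ^ m \<in> laurent_polys" "g * (1 - zvar ^ M) ^ m' \<in> laurent_polys"
    using assms by (auto simp: has_denominator_one_minus_zvar_power_def)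
  then have NM: "N * M \<ge> 1"
    and f: "f * (1 - zvar ^ (N * M)) ^ m \<in> laurent_polys"
    and g: "g * (1 - zvar ^ (M * N)) ^ m' \<in> laurent_polys"
    by (simp_all add: denominator_one_minus_zvar_power_mult)
  define D where "D = 1 - zvar ^ (N * M)"
  have D: "D \<in> laurent_polys"
    by (simp add: D_def one_minus_zvar_power_in_laurent_polys)
  have add_eq: "(f + g) * D ^ (m + m') = f * D ^ m * D ^ m' + g * D ^ m' * D ^ m"
    and mult_eq: "(f * g) * D ^ (m + m') = f * D ^ m * (g * D ^ m')"
    by (simp_all add: power_add algebra_simps)
  have "(f + g) * D ^ (m + m') \<in> laurent_polys" "(f * g) * D ^ (m + m') \<in> laurent_polys"
    using f g D unfolding add_eq mult_eq mult.commute[of M N] D_def[symmetric]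
    by (simp_all add: laurent_polys_add laurent_polys_mult laurent_polys_power)
  then show "has_denominator_one_minus_zvar_power (f + g)"
    and "has_denominator_one_minus_zvar_power (f * g)"
    using NM unfolding has_denominator_one_minus_zvar_power_def D_def by blast+
qed

lemma laurent_polys_has_denominator_one_minus_zvar_power:
  "f \<in> laurent_polys \<Longrightarrow> has_denominator_one_minus_zvar_power f"
  unfolding has_denominator_one_minus_zvar_power_def by (rule exI[of _ 1], rule exI[of _ 0]) simp

lemma kloc_has_denominator_one_minus_zvar_power:
  "f \<in> kloc \<Longrightarrow> has_denominator_one_minus_zvar_power f"
proof (induct rule: kloc.induct)
  case (const c)
  show ?case
    by (intro laurent_polys_has_denominator_one_minus_zvar_power of_int_in_laurent_polys)
next
  case zv
  show ?case
    using laurent_polys_has_denominator_one_minus_zvar_power[OF zvar_power_int_in_laurent_polys[of 1]]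
    by simp
next
  case zinv
  show ?case
    using laurent_polys_has_denominator_one_minus_zvar_power[OF zvar_power_int_in_laurent_polys[of "- 1"]]
    by (simp add: power_int_minus)
next
  case (loc i)
  then obtain n where n: "n \<ge> 1" "i = int n \<or> i = - int n"
    by (cases i rule: int_cases2) auto
  have "inverse (1 - zvar powi i) * (1 - zvar ^ n) ^ 1 = 1
      \<or> inverse (1 - zvar powi i) * (1 - zvar ^ n) ^ 1 = - (zvar ^ n)"
    using n one_minus_zvar_power_nonzero[OF n(1)] zvar_nonzero
    by (auto simp: power_int_minus field_simps)
  moreover have "- (zvar ^ n) \<in> laurent_polys"
    using laurent_polys_uminus zvar_power_int_in_laurent_polys[of "int n"] by simp
  ultimately have "inverse (1 - zvar powi i) * (1 - zvar ^ n) ^ 1 \<in> laurent_polys"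
    using of_int_in_laurent_polys[of 1] by auto
  then show ?case
    using n(1) unfolding has_denominator_one_minus_zvar_power_def by blast
next
  case (add f g)
  then show ?case
    by (simp add: has_denominator_one_minus_zvar_power_add_mult)
next
  case (mult f g)
  then show ?case
    by (simp add: has_denominator_one_minus_zvar_power_add_mult)
qed

inductive_set partial_fraction_span :: "ratfun set" where
  laurent_poly: "f \<in> laurent_polys \<Longrightarrow> f \<in> partial_fraction_span"
| basic_fraction: "n \<ge> 1 \<Longrightarrow> a < n \<Longrightarrow> basic_fraction n k a \<in> partial_fraction_span"
| add: "f \<in> partial_fraction_span \<Longrightarrow> g \<in> partial_fraction_span \<Longrightarrow> f + g \<in> partial_fraction_span"
| of_int_mult: "f \<in> partial_fraction_span \<Longrightarrow> of_int c * f \<in> partial_fraction_span"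

lemma laurent_poly_divide_in_partial_fraction_span:
  assumes "N \<ge> 1" "g \<in> laurent_polys"
  shows "g / (1 - zvar ^ N) ^ m \<in> partial_fraction_span"
  using assms(2)
proof (induct m arbitrary: g)
  case 0
  then show ?case
    by (simp add: partial_fraction_span.laurent_poly)
next
  case (Suc m)
  define D where "D = 1 - zvar ^ N"
  have "D \<noteq> 0"
    using one_minus_zvar_power_nonzero[OF assms(1)] by (simp add: D_def)
  have monomial: "zvar powi e / D ^ Suc m \<in> partial_fraction_span" for e
  proof -
    define a where "a = nat (e mod int N)"
    have "a < N"
      using assms(1) by (simp add: a_def nat_less_iff)
    have "e mod int N = int (N * m + a) mod int N"
      using assms(1) by (simp add: a_def)
    then have "int N dvd e - int (N * m + a)"
      by (simp only: mod_eq_dvd_iff)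
    then obtain w where w: "w \<in> laurent_polys" "zvar powi e - zvar ^ (N * m + a) = D * w"
      unfolding D_def by (metis zvar_power_int_diff_factor power_int_of_nat)
    then have "zvar powi e / D ^ Suc m = basic_fraction N m a + w / D ^ m"
      using \<open>D \<noteq> 0\<close> by (simp add: basic_fraction_def D_def[symmetric] field_simps eq_diff_eq)
    then show ?thesis
      using Suc(1)[OF w(1), folded D_def] \<open>a < N\<close> assms(1)
      by (simp add: partial_fraction_span.add partial_fraction_span.basic_fraction)
  qed
  from Suc(2) show ?case
    unfolding D_def[symmetric]
  proof (induct rule: laurent_polys_induct)
    case (zvar_power_int e)
    show ?case
      by (rule monomial)
  next
    case (add f g)
    then show ?case
      by (simp add: add_divide_distrib partial_fraction_span.add)
  next
    case (of_int_mult c f)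
    then show ?case
      by (metis times_divide_eq_right partial_fraction_span.of_int_mult)
  qed
qed

lemma kloc_power: "f \<in> kloc \<Longrightarrow> f ^ k \<in> kloc"
  using kloc.const[of 1] by (induct k) (simp_all add: kloc.mult)

lemma zvar_power_int_in_kloc: "zvar powi e \<in> kloc"
  by (simp add: power_int_def kloc_power kloc.zv kloc.zinv)

lemma partial_fraction_span_subset_kloc: "partial_fraction_span \<subseteq> kloc"
proof
  fix f
  assume "f \<in> partial_fraction_span"
  then show "f \<in> kloc"
  proof (induct rule: partial_fraction_span.induct)
    case (laurent_poly f)
    then show ?case
      by (induct rule: laurent_polys_induct) (auto intro: kloc.intros zvar_power_int_in_kloc)
  next
    case (basic_fraction n a k)
    then have "inverse (1 - zvar powi int n) \<in> kloc"
      by (intro kloc.loc) simp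
    then show ?case
      unfolding basic_fraction_def divide_inverse power_inverse[symmetric]
      by (simp add: kloc.mult kloc.zv kloc_power)
  qed (auto intro: kloc.intros)
qed

lemma kloc_eq_partial_fraction_span: "kloc = partial_fraction_span"
proof
  show "kloc \<subseteq> partial_fraction_span"
  proof
    fix f
    assume "f \<in> kloc"
    then obtain N m where "N \<ge> 1" and cleared: "f * (1 - zvar ^ N) ^ m \<in> laurent_polys"
      using kloc_has_denominator_one_minus_zvar_power
      unfolding has_denominator_one_minus_zvar_power_def by blast
    have "f * (1 - zvar ^ N) ^ m / (1 - zvar ^ N) ^ m = f"
      using one_minus_zvar_power_nonzero[OF \<open>N \<ge> 1\<close>] by simp
    then show "f \<in> partial_fraction_span"
      using laurent_poly_divide_in_partial_fraction_span[OF \<open>N \<ge> 1\<close> cleared] by metis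
  qed
qed (rule partial_fraction_span_subset_kloc)

lemma rhoK_in_Ints: "f \<in> kloc \<Longrightarrow> rhoK f \<in> \<int>"
  unfolding kloc_eq_partial_fraction_span
  by (induct rule: partial_fraction_span.induct)
    (simp_all add: rhoK_laurent_polys rhoK_basic_fraction rhoK_add rhoK_of_int_mult)

lemma kloc_functional_eq_rhoK:
  fixes \<rho> :: "ratfun \<Rightarrow> int"
  assumes additive: "\<And>f g. f \<in> kloc \<Longrightarrow> g \<in> kloc \<Longrightarrow> \<rho> (f + g) = \<rho> f + \<rho> g"
    and homogeneous: "\<And>c f. f \<in> kloc \<Longrightarrow> \<rho> (of_int c * f) = c * \<rho> f"
    and vanishes: "\<And>f. f \<in> laurent_polys \<Longrightarrow> \<rho> f = 0"
    and normalized: "\<And>n k a. n \<ge> 1 \<Longrightarrow> a < n \<Longrightarrow>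
      \<rho> (basic_fraction n k a) = (if k = 0 \<and> a = 0 then 1 else 0)"
    and "f \<in> kloc"
  shows "of_int (\<rho> f) = rhoK f"
  using \<open>f \<in> kloc\<close> unfolding kloc_eq_partial_fraction_span
proof (induct rule: partial_fraction_span.induct)
  case (add f g)
  then show ?case
    using additive by (simp add: rhoK_add kloc_eq_partial_fraction_span)
next
  case (of_int_mult f c)
  then show ?case
    using homogeneous by (simp add: rhoK_of_int_mult kloc_eq_partial_fraction_span)
qed (simp_all add: vanishes rhoK_laurent_polys normalized rhoK_basic_fraction)

theorem propositionA1:
  shows "(\<forall>f\<in>kloc. rhoK f \<in> \<int>)
    \<and> (\<forall>f\<in>laurent_polys. rhoK f = 0)
    \<and> (\<forall>(n::nat) (k::nat) (a::nat). n \<ge> 1 \<longrightarrow> a < n \<longrightarrow>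
          rhoK (zvar ^ (n * k + a) / (1 - zvar ^ n) ^ (k + 1)) = (if k = 0 \<and> a = 0 then 1 else 0))
    \<and> (\<forall>\<rho> :: ratfun \<Rightarrow> int.
          (\<forall>f\<in>kloc. \<forall>g\<in>kloc. \<rho> (f + g) = \<rho> f + \<rho> g)
        \<longrightarrow> (\<forall>f\<in>kloc. \<forall>c::int. \<rho> (of_int c * f) = c * \<rho> f)
        \<longrightarrow> (\<forall>f\<in>laurent_polys. \<rho> f = 0)
        \<longrightarrow> (\<forall>(n::nat) (k::nat) (a::nat). n \<ge> 1 \<longrightarrow> a < n \<longrightarrow>
              \<rho> (zvar ^ (n * k + a) / (1 - zvar ^ n) ^ (k + 1)) = (if k = 0 \<and> a = 0 then 1 else 0))
        \<longrightarrow> (\<forall>f\<in>kloc. of_int (\<rho> f) = rhoK f))"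
  unfolding basic_fraction_def[symmetric]
  using rhoK_in_Ints rhoK_laurent_polys rhoK_basic_fraction kloc_functional_eq_rhoK
  by (simp add: Ball_def)

end
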